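(* Let a discrete mean-field game be given (setting in the context) and fix $\epsilon>0$. (CCE version) Run MF-PSRO(CCE): start with $\Pi_1=\{\pi_1\}$, $\pi_1\in\Pi$. At each iteration $n$, let $\rho_n$ be a finitely supported distribution over $\Delta(\Pi_n)$ that is a restricted $\epsilon$-MFCCE for $\Pi_n$ (as obtained from a no-external-regret learner run until its average regret is at most $\epsilon$); pick $\pi^{new}\in\arg\max_{\pi\in\Pi}\sum_\nu\rho_n(\nu)J(\pi,\mu(\nu))$, set $\Pi_{n+1}=\Pi_n\cup\{\pi^{new}\}$, and terminate if $\Pi_{n+1}=\Pi_n$. Then the algorithm terminates after finitely many iterations and the final $\rho_n$ is an $\epsilon$-MFCCE of the full game. (CE version) Run MF-PSRO(CE): same, except that $\rho_n$ is a restricted $\epsilon$-MFCE for $\Pi_n$ (as obtained from a no-internal-regret learner with average regret at most $\epsilon$), and $\Pi_{n+1}=\Pi_n\cup\{\pi^{new}(\pi_k):\pi_k\in\Pi_n,\ \rho_n(\pi_k)>0\}$ where $\pi^{new}(\pi_k)\in\arg\max_{\pi\in\Pi}\sum_\nu\rho_n(\nu\mid\pi_k)J(\pi,\mu(\nu))$. Then the algorithm terminates after finitely many iterations and the final $\rho_n$ is an $\epsilon$-MFCE of the full game.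
   Context: A discrete mean-field game consists of a finite state set $\mathcal X$, a finite action set $\mathcal A$, a reward $r:\mathcal X\times\mathcal A\times\Delta(\mathcal X)\to\mathbb R$, transition probabilities $p(x'\mid x,a)$ not depending on the population distribution, and an initial distribution $\mu_0$. A policy is $\pi:\mathcal X\to\Delta(\mathcal A)$; $\Pi$ is the finite set of deterministic policies; $\mu^\pi$ is the state occupancy measure of $\pi$ (discounted or finite-horizon); $J(\pi,\mu)=\sum_{x,a}\mu^\pi(x)\pi(x,a)r(x,a,\mu)$. For $\nu$ a distribution over a finite set of policies, $\mu(\nu)=\sum_\pi\nu(\pi)\mu^\pi$ and $\pi(\nu)$ is the policy sampling a policy from $\nu$ at the start and playing it throughout, so $J(\pi(\nu),\mu)=\sum_\pi\nu(\pi)J(\pi,\mu)$. For a finitely supported correlation device $\rho$ over $\Delta(\Pi_n)$: $\rho(\pi)=\sum_\nu\nu(\pi)\rho(\nu)$ and $\rho(\nu\mid\pi)=\nu(\pi)\rho(\nu)/\sum_{\nu'}\nu'(\pi)\rho(\nu')$. $\rho$ is a restricted $\epsilon$-MFCCE for $\Pi_n$ if $\mathbb E_{\nu\sim\rho,\pi\sim\nu}[J(\pi',\mu(\nu))-J(\pi,\mu(\nu))]\le\epsilon$ for all $\pi'\in\Pi_n$, and an $\epsilon$-MFCCE of the full game if this holds for all $\pi'\in\Pi$. $\rho$ is a restricted $\epsilon$-MFCE for $\Pi_n$ if $\rho(\pi)\,\mathbb E_{\nu\sim\rho(\cdot\mid\pi)}[J(\pi',\mu(\nu))-J(\pi,\mu(\nu))]\le\epsilon$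 for all $\pi,\pi'\in\Pi_n$, and an $\epsilon$-MFCE of the full game if this holds for all $\pi\in\Pi_n$ and all $\pi'\in\Pi$ (recommendations $\pi$ lie in the support, which is inside $\Pi_n$). *)

theory Defs
  imports "HOL-Probability.Probability_Mass_Function"
begin

record ('x, 'a) mfg =
  trans  :: "'x \<Rightarrow> 'a \<Rightarrow> 'x \<Rightarrow> real"          (* trans G x a x' = p(x' | x, a) *)
  init   :: "'x \<Rightarrow> real"
  rew    :: "'x \<Rightarrow> 'a \<Rightarrow> ('x \<Rightarrow> real) \<Rightarrow> real"
  weight :: "nat \<Rightarrow> real"                         (* time weights defining the occupancy measure *)

definition is_dist :: "('b::finite \<Rightarrow> real) \<Rightarrow> bool" where
  "is_dist d \<longleftrightarrow> (\<forall>y. 0 \<le> d y) \<and> (\<Sum>y\<in>UNIV. d y) = 1"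

definition mfg_valid :: "('x::finite, 'a::finite) mfg \<Rightarrow> bool" where
  "mfg_valid G \<longleftrightarrow>
     (\<forall>x a. is_dist (trans G x a)) \<and> is_dist (init G) \<and>
     ((\<exists>\<gamma>::real. 0 \<le> \<gamma> \<and> \<gamma> < 1 \<and> weight G = (\<lambda>t. (1 - \<gamma>) * \<gamma> ^ t)) \<or>
      (\<exists>H::nat. 0 < H \<and> weight G = (\<lambda>t. if t < H then 1 / real H else 0)))"

(* stochastic policy: pol x a = pi(x, a); deterministic policy 'x \<Rightarrow> 'a embedded *)
definition det_pol :: "('x \<Rightarrow> 'a) \<Rightarrow> 'x \<Rightarrow> 'a \<Rightarrow> real" where
  "det_pol \<pi> x a = (if \<pi> x = a then 1 else 0)"

fun state_dist :: "('x::finite, 'a::finite) mfg \<Rightarrow> ('x \<Rightarrow> 'a \<Rightarrow> real) \<Rightarrow> nat \<Rightarrow> 'x \<Rightarrow> real" where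
  "state_dist G pol 0 = init G"
| "state_dist G pol (Suc t) =
     (\<lambda>x'. \<Sum>x\<in>UNIV. \<Sum>a\<in>UNIV. state_dist G pol t x * pol x a * trans G x a x')"

definition occ :: "('x::finite, 'a::finite) mfg \<Rightarrow> ('x \<Rightarrow> 'a \<Rightarrow> real) \<Rightarrow> 'x \<Rightarrow> real" where
  "occ G pol x = (\<Sum>t. weight G t * state_dist G pol t x)"

definition J :: "('x::finite, 'a::finite) mfg \<Rightarrow> ('x \<Rightarrow> 'a \<Rightarrow> real) \<Rightarrow> ('x \<Rightarrow> real) \<Rightarrow> real" where
  "J G pol \<mu> = (\<Sum>x\<in>UNIV. \<Sum>a\<in>UNIV. occ G pol x * pol x a * rew G x a \<mu>)"

definition Jd :: "('x::finite, 'a::finite) mfg \<Rightarrow> ('x \<Rightarrow> 'a) \<Rightarrow> ('x \<Rightarrow> real) \<Rightarrow> real" where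
  "Jd G \<pi> \<mu> = J G (det_pol \<pi>) \<mu>"

definition mu_of :: "('x::finite, 'a::finite) mfg \<Rightarrow> ('x \<Rightarrow> 'a) pmf \<Rightarrow> 'x \<Rightarrow> real" where
  "mu_of G \<nu> = (\<lambda>x. \<Sum>\<pi>\<in>UNIV. pmf \<nu> \<pi> * occ G (det_pol \<pi>) x)"

definition device_over :: "('x \<Rightarrow> 'a) set \<Rightarrow> ('x \<Rightarrow> 'a) pmf pmf \<Rightarrow> bool" where
  "device_over S \<rho> \<longleftrightarrow> finite (set_pmf \<rho>) \<and> (\<forall>\<nu>\<in>set_pmf \<rho>. set_pmf \<nu> \<subseteq> S)"

definition rho_pol :: "('x \<Rightarrow> 'a) pmf pmf \<Rightarrow> ('x \<Rightarrow> 'a) \<Rightarrow> real" where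
  "rho_pol \<rho> \<pi> = (\<Sum>\<nu>\<in>set_pmf \<rho>. pmf \<nu> \<pi> * pmf \<rho> \<nu>)"

definition rho_cond :: "('x \<Rightarrow> 'a) pmf pmf \<Rightarrow> ('x \<Rightarrow> 'a) pmf \<Rightarrow> ('x \<Rightarrow> 'a) \<Rightarrow> real" where
  "rho_cond \<rho> \<nu> \<pi> = pmf \<nu> \<pi> * pmf \<rho> \<nu> / rho_pol \<rho> \<pi>"

definition cce_gap :: "('x::finite, 'a::finite) mfg \<Rightarrow> ('x \<Rightarrow> 'a) pmf pmf \<Rightarrow> ('x \<Rightarrow> 'a) \<Rightarrow> real" where
  "cce_gap G \<rho> \<pi>' = (\<Sum>\<nu>\<in>set_pmf \<rho>. pmf \<rho> \<nu> *
      (\<Sum>\<pi>\<in>UNIV. pmf \<nu> \<pi> * (Jd G \<pi>' (mu_of G \<nu>) - Jd G \<pi> (mu_of G \<nu>))))"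

definition ce_gap :: "('x::finite, 'a::finite) mfg \<Rightarrow> ('x \<Rightarrow> 'a) pmf pmf \<Rightarrow> ('x \<Rightarrow> 'a) \<Rightarrow> ('x \<Rightarrow> 'a) \<Rightarrow> real" where
  "ce_gap G \<rho> \<pi> \<pi>' = rho_pol \<rho> \<pi> *
      (\<Sum>\<nu>\<in>set_pmf \<rho>. rho_cond \<rho> \<nu> \<pi> * (Jd G \<pi>' (mu_of G \<nu>) - Jd G \<pi> (mu_of G \<nu>)))"

definition restricted_mfcce :: "('x::finite, 'a::finite) mfg \<Rightarrow> real \<Rightarrow> ('x \<Rightarrow> 'a) set \<Rightarrow> ('x \<Rightarrow> 'a) pmf pmf \<Rightarrow> bool" where
  "restricted_mfcce G \<epsilon> S \<rho> \<longleftrightarrow> device_over S \<rho> \<and> (\<forall>\<pi>'\<in>S. cce_gap G \<rho> \<pi>' \<le> \<epsilon>)"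

(* epsilon-MFCCE of the full game: deviations to all deterministic policies (Pi = UNIV) *)
definition mfcce :: "('x::finite, 'a::finite) mfg \<Rightarrow> real \<Rightarrow> ('x \<Rightarrow> 'a) pmf pmf \<Rightarrow> bool" where
  "mfcce G \<epsilon> \<rho> \<longleftrightarrow> (\<forall>\<pi>'. cce_gap G \<rho> \<pi>' \<le> \<epsilon>)"

definition restricted_mfce :: "('x::finite, 'a::finite) mfg \<Rightarrow> real \<Rightarrow> ('x \<Rightarrow> 'a) set \<Rightarrow> ('x \<Rightarrow> 'a) pmf pmf \<Rightarrow> bool" where
  "restricted_mfce G \<epsilon> S \<rho> \<longleftrightarrow> device_over S \<rho> \<and> (\<forall>\<pi>\<in>S. \<forall>\<pi>'\<in>S. ce_gap G \<rho> \<pi> \<pi>' \<le> \<epsilon>)"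

(* epsilon-MFCE of the full game: recommendations pi in S (containing the support), deviations in Pi = UNIV *)
definition mfce :: "('x::finite, 'a::finite) mfg \<Rightarrow> real \<Rightarrow> ('x \<Rightarrow> 'a) set \<Rightarrow> ('x \<Rightarrow> 'a) pmf pmf \<Rightarrow> bool" where
  "mfce G \<epsilon> S \<rho> \<longleftrightarrow> (\<forall>\<pi>\<in>S. \<forall>\<pi>'. ce_gap G \<rho> \<pi> \<pi>' \<le> \<epsilon>)"

definition running :: "(nat \<Rightarrow> ('x \<Rightarrow> 'a) set) \<Rightarrow> nat \<Rightarrow> bool" where
  "running Pis n \<longleftrightarrow> (\<forall>m. 1 \<le> m \<and> m < n \<longrightarrow> Pis (Suc m) \<noteq> Pis m)"

(* A run of MF-PSRO(CCE): Pis n = Pi_n, rhos n = rho_n, newp n = pi^new at iteration n.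
   Iteration n is only executed if the algorithm has not terminated before. *)
definition psro_cce_run :: "('x::finite, 'a::finite) mfg \<Rightarrow> real \<Rightarrow> ('x \<Rightarrow> 'a) \<Rightarrow>
    (nat \<Rightarrow> ('x \<Rightarrow> 'a) set) \<Rightarrow> (nat \<Rightarrow> ('x \<Rightarrow> 'a) pmf pmf) \<Rightarrow> (nat \<Rightarrow> ('x \<Rightarrow> 'a)) \<Rightarrow> bool" where
  "psro_cce_run G \<epsilon> \<pi>1 Pis rhos newp \<longleftrightarrow>
     Pis 1 = {\<pi>1} \<and>
     (\<forall>n\<ge>1. running Pis n \<longrightarrow>
        restricted_mfcce G \<epsilon> (Pis n) (rhos n) \<and>
        (\<forall>\<pi>. (\<Sum>\<nu>\<in>set_pmf (rhos n). pmf (rhos n) \<nu> * Jd G \<pi> (mu_of G \<nu>))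
              \<le> (\<Sum>\<nu>\<in>set_pmf (rhos n). pmf (rhos n) \<nu> * Jd G (newp n) (mu_of G \<nu>))) \<and>
        Pis (Suc n) = Pis n \<union> {newp n})"

definition psro_ce_run :: "('x::finite, 'a::finite) mfg \<Rightarrow> real \<Rightarrow> ('x \<Rightarrow> 'a) \<Rightarrow>
    (nat \<Rightarrow> ('x \<Rightarrow> 'a) set) \<Rightarrow> (nat \<Rightarrow> ('x \<Rightarrow> 'a) pmf pmf) \<Rightarrow> (nat \<Rightarrow> ('x \<Rightarrow> 'a) \<Rightarrow> ('x \<Rightarrow> 'a)) \<Rightarrow> bool" where
  "psro_ce_run G \<epsilon> \<pi>1 Pis rhos newp \<longleftrightarrow>
     Pis 1 = {\<pi>1} \<and>
     (\<forall>n\<ge>1. running Pis n \<longrightarrow>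
        restricted_mfce G \<epsilon> (Pis n) (rhos n) \<and>
        (\<forall>pk\<in>Pis n. rho_pol (rhos n) pk > 0 \<longrightarrow>
           (\<forall>\<pi>. (\<Sum>\<nu>\<in>set_pmf (rhos n). rho_cond (rhos n) \<nu> pk * Jd G \<pi> (mu_of G \<nu>))
                 \<le> (\<Sum>\<nu>\<in>set_pmf (rhos n). rho_cond (rhos n) \<nu> pk * Jd G (newp n pk) (mu_of G \<nu>)))) \<and>
        Pis (Suc n) = Pis n \<union> {newp n pk | pk. pk \<in> Pis n \<and> rho_pol (rhos n) pk > 0})"

end

theory Submission
  imports Defs
begin

text \<open>
  Both algorithms only ever enlarge the population Pi_n of deterministic policies, of which
  there are finitely many, so some iteration leaves it unchanged. At that iteration the best
  response to rho_n (to rho_n(. | \<pi>) for every recommendation \<pi> of positive probability in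
  the CE version) already lies in Pi_n. A deviation to any \<pi>' gains at most as much as a
  deviation to that best response, which gains at most \<epsilon> because rho_n is a restricted
  equilibrium.
\<close>

lemma no_strictly_increasing_chain:
  fixes S :: "nat \<Rightarrow> 'b::finite set"
  assumes "\<And>n. S n \<subset> S (Suc n)"
  shows False
proof -
  have "strict_mono (\<lambda>n. card (S n))"
    using assms by (simp add: strict_mono_Suc_iff psubset_card_mono)
  then have "Suc CARD('b) \<le> card (S (Suc CARD('b)))"
    by (rule strict_mono_imp_increasing)
  moreover have "card (S (Suc CARD('b))) \<le> CARD('b)"
    by (simp add: card_mono)
  ultimately show False by simp
qed

lemma running_Suc:
  "running Pis (Suc n) \<longleftrightarrow> running Pis n \<and> (1 \<le> n \<longrightarrow> Pis (Suc n) \<noteq> Pis n)"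
  unfolding running_def less_Suc_eq by blast

lemma growing_population_stabilizes:
  fixes Pis :: "nat \<Rightarrow> ('b::finite \<Rightarrow> 'c::finite) set"
  assumes grows: "\<And>n. 1 \<le> n \<Longrightarrow> running Pis n \<Longrightarrow> Pis n \<subseteq> Pis (Suc n)"
  shows "\<exists>n\<ge>1. running Pis n \<and> Pis (Suc n) = Pis n"
proof (rule ccontr)
  assume never_stable: "\<not> ?thesis"
  have running: "running Pis n" for n
  proof (induction n)
    case 0
    show ?case by (simp add: running_def)
  next
    case (Suc n)
    with never_stable show ?case by (simp add: running_Suc)
  qed
  have "Pis (Suc n) \<subset> Pis (Suc (Suc n))" for n
    using grows[of "Suc n"] running[of "Suc n"] never_stable by auto
  then show False
    by (rule no_strictly_increasing_chain)
qed

lemma cce_gap_eq: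
  "cce_gap G \<rho> \<pi>' = (\<Sum>\<nu>\<in>set_pmf \<rho>. pmf \<rho> \<nu> * Jd G \<pi>' (mu_of G \<nu>))
     - (\<Sum>\<nu>\<in>set_pmf \<rho>. pmf \<rho> \<nu> * (\<Sum>\<pi>\<in>UNIV. pmf \<nu> \<pi> * Jd G \<pi> (mu_of G \<nu>)))"
proof -
  have "(\<Sum>\<pi>\<in>UNIV. pmf \<nu> \<pi> * (Jd G \<pi>' (mu_of G \<nu>) - Jd G \<pi> (mu_of G \<nu>)))
     = Jd G \<pi>' (mu_of G \<nu>) - (\<Sum>\<pi>\<in>UNIV. pmf \<nu> \<pi> * Jd G \<pi> (mu_of G \<nu>))" for \<nu>
    by (simp add: right_diff_distrib sum_subtractf sum_pmf_eq_1 flip: sum_distrib_right)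
  then show ?thesis
    unfolding cce_gap_def by (simp add: right_diff_distrib sum_subtractf)
qed

lemma mfcce_if_best_response_in:
  assumes "restricted_mfcce G \<epsilon> S \<rho>" and "br \<in> S"
    and best: "\<And>\<pi>. (\<Sum>\<nu>\<in>set_pmf \<rho>. pmf \<rho> \<nu> * Jd G \<pi> (mu_of G \<nu>))
                 \<le> (\<Sum>\<nu>\<in>set_pmf \<rho>. pmf \<rho> \<nu> * Jd G br (mu_of G \<nu>))"
  shows "mfcce G \<epsilon> \<rho>"
  unfolding mfcce_def
proof
  fix \<pi>'
  have "cce_gap G \<rho> \<pi>' \<le> cce_gap G \<rho> br"
    using best[of \<pi>'] by (simp add: cce_gap_eq)
  also have "\<dots> \<le> \<epsilon>"
    using assms(1,2) by (simp add: restricted_mfcce_def)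
  finally show "cce_gap G \<rho> \<pi>' \<le> \<epsilon>" .
qed

lemma psro_cce_run_ends_in_mfcce:
  assumes run: "psro_cce_run G \<epsilon> \<pi>1 Pis rhos newp"
  shows "\<exists>n\<ge>1. running Pis n \<and> Pis (Suc n) = Pis n \<and> mfcce G \<epsilon> (rhos n)"
proof -
  have "\<exists>n\<ge>1. running Pis n \<and> Pis (Suc n) = Pis n"
    using run by (intro growing_population_stabilizes) (auto simp: psro_cce_run_def)
  then obtain n where n: "n \<ge> 1" "running Pis n" "Pis (Suc n) = Pis n"
    by blast
  then have "restricted_mfcce G \<epsilon> (Pis n) (rhos n)" and "newp n \<in> Pis n"
    and "\<And>\<pi>. (\<Sum>\<nu>\<in>set_pmf (rhos n). pmf (rhos n) \<nu> * Jd G \<pi> (mu_of G \<nu>))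
              \<le> (\<Sum>\<nu>\<in>set_pmf (rhos n). pmf (rhos n) \<nu> * Jd G (newp n) (mu_of G \<nu>))"
    using run unfolding psro_cce_run_def by auto
  then have "mfcce G \<epsilon> (rhos n)"
    by (rule mfcce_if_best_response_in)
  with n show ?thesis by blast
qed

lemma ce_gap_eq:
  "ce_gap G \<rho> \<pi> \<pi>' = rho_pol \<rho> \<pi> * ((\<Sum>\<nu>\<in>set_pmf \<rho>. rho_cond \<rho> \<nu> \<pi> * Jd G \<pi>' (mu_of G \<nu>))
     - (\<Sum>\<nu>\<in>set_pmf \<rho>. rho_cond \<rho> \<nu> \<pi> * Jd G \<pi> (mu_of G \<nu>)))"
  unfolding ce_gap_def by (simp add: right_diff_distrib sum_subtractf)

lemma rho_pol_nonneg: "rho_pol \<rho> \<pi> \<ge> 0"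
  unfolding rho_pol_def by (intro sum_nonneg) simp

lemma mfce_if_best_responses_in:
  assumes restricted: "restricted_mfce G \<epsilon> S \<rho>" and "0 \<le> \<epsilon>"
    and br_in: "\<And>\<pi>. \<pi> \<in> S \<Longrightarrow> rho_pol \<rho> \<pi> > 0 \<Longrightarrow> br \<pi> \<in> S"
    and best: "\<And>\<pi> \<pi>'. \<pi> \<in> S \<Longrightarrow> rho_pol \<rho> \<pi> > 0 \<Longrightarrow>
          (\<Sum>\<nu>\<in>set_pmf \<rho>. rho_cond \<rho> \<nu> \<pi> * Jd G \<pi>' (mu_of G \<nu>))
        \<le> (\<Sum>\<nu>\<in>set_pmf \<rho>. rho_cond \<rho> \<nu> \<pi> * Jd G (br \<pi>) (mu_of G \<nu>))"
  shows "mfce G \<epsilon> S \<rho>"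
  unfolding mfce_def
proof (intro ballI allI)
  fix \<pi> \<pi>'
  assume "\<pi> \<in> S"
  consider "rho_pol \<rho> \<pi> = 0" | "rho_pol \<rho> \<pi> > 0"
    using rho_pol_nonneg[of \<rho> \<pi>] by linarith
  then show "ce_gap G \<rho> \<pi> \<pi>' \<le> \<epsilon>"
  proof cases
    case 1
    then show ?thesis using \<open>0 \<le> \<epsilon>\<close> by (simp add: ce_gap_eq)
  next
    case 2
    have "ce_gap G \<rho> \<pi> \<pi>' \<le> ce_gap G \<rho> \<pi> (br \<pi>)"
      unfolding ce_gap_eq using 2 best[OF \<open>\<pi> \<in> S\<close> 2, of \<pi>'] by (intro mult_left_mono) auto
    also have "\<dots> \<le> \<epsilon>"
      using restricted br_in[OF \<open>\<pi> \<in> S\<close> 2] \<open>\<pi> \<in> S\<close> by (simp add: restricted_mfce_def)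
    finally show ?thesis .
  qed
qed

lemma psro_ce_run_ends_in_mfce:
  assumes run: "psro_ce_run G \<epsilon> \<pi>1 Pis rhos newp" and "0 \<le> \<epsilon>"
  shows "\<exists>n\<ge>1. running Pis n \<and> Pis (Suc n) = Pis n \<and> mfce G \<epsilon> (Pis n) (rhos n)"
proof -
  have "\<exists>n\<ge>1. running Pis n \<and> Pis (Suc n) = Pis n"
    using run by (intro growing_population_stabilizes) (auto simp: psro_ce_run_def)
  then obtain n where n: "n \<ge> 1" "running Pis n" "Pis (Suc n) = Pis n"
    by blast
  then have "mfce G \<epsilon> (Pis n) (rhos n)"
    using run \<open>0 \<le> \<epsilon>\<close> unfolding psro_ce_run_def
    by (intro mfce_if_best_responses_in[where br = "newp n"]) auto
  with n show ?thesis by blast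
qed

theorem mainTheorem5:
  fixes G :: "('x::finite, 'a::finite) mfg" and \<epsilon> :: real and \<pi>1 :: "'x \<Rightarrow> 'a"
  assumes "mfg_valid G" and "\<epsilon> > 0"
  shows
    "(\<forall>Pis rhos newp. psro_cce_run G \<epsilon> \<pi>1 Pis rhos newp \<longrightarrow>
        (\<exists>n\<ge>1. running Pis n \<and> Pis (Suc n) = Pis n \<and> mfcce G \<epsilon> (rhos n))) \<and>
     (\<forall>Pis rhos newp. psro_ce_run G \<epsilon> \<pi>1 Pis rhos newp \<longrightarrow>
        (\<exists>n\<ge>1. running Pis n \<and> Pis (Suc n) = Pis n \<and> mfce G \<epsilon> (Pis n) (rhos n)))"
proof (intro conjI allI impI)
  fix Pis rhos newp
  assume "psro_cce_run G \<epsilon> \<pi>1 Pis rhos newp"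
  then show "\<exists>n\<ge>1. running Pis n \<and> Pis (Suc n) = Pis n \<and> mfcce G \<epsilon> (rhos n)"
    by (rule psro_cce_run_ends_in_mfcce)
next
  fix Pis rhos newp
  assume "psro_ce_run G \<epsilon> \<pi>1 Pis rhos newp"
  then show "\<exists>n\<ge>1. running Pis n \<and> Pis (Suc n) = Pis n \<and> mfce G \<epsilon> (Pis n) (rhos n)"
    using \<open>\<epsilon> > 0\<close> by (intro psro_ce_run_ends_in_mfce) auto
qed

end
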